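(* Let $T$ be a $C_{p^rq^s}$-transfer system with exactly two connected components. Then the connected component of $(0,0)$ is either $V_\ell$ for some $0\le\ell<r$, or $H_k$ for some $0\le k<s$, or $L_{(\ell,k)}$ for some $0\le \ell<r$ and $0\le k<s$.
   Context: $p,q$ are distinct primes and $r,s\ge 0$ integers. The subgroups of $C_{p^rq^s}$ are identified with grid points $(i,j)$, $0\le i\le r$, $0\le j\le s$, where $(i,j)$ stands for $C_{p^iq^j}$. A $C_{p^rq^s}$-transfer system is a partial order $\to$ on these vertices such that: $(i_1,j_1)\to(i_2,j_2)$ implies $i_1\le i_2$, $j_1\le j_2$; it is reflexive and transitive; and $(i_1,j_1)\to(i_2,j_2)$ implies $(\min\{i_1,a\},\min\{j_1,b\})\to(\min\{i_2,a\},\min\{j_2,b\})$ for every vertex $(a,b)$. Connected components are those of the underlying undirected graph. Define $V_\ell=\{(i,j): 0\le i\le \ell,\ 0\le j\le s\}$ (for $\ell<r$), $H_k=\{(i,j): 0\le i\le r,\ 0\le j\le k\}$ (for $k<s$), and $L_{(\ell,k)}=V_\ell\cup H_k$. *)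

theory Defs
  imports "HOL-Computational_Algebra.Primes"
begin

text \<open>Subgroups of the cyclic group of order p^r q^s, identified with grid points (i,j),
  where (i,j) stands for the subgroup of order p^i q^j.\<close>
definition grid :: "nat \<Rightarrow> nat \<Rightarrow> (nat \<times> nat) set" where
  "grid r s = {0..r} \<times> {0..s}"

text \<open>A transfer system: a partial order (reflexive, antisymmetric, transitive relation)
  on the grid, refining the componentwise order, and closed under restriction
  (taking componentwise minima with any vertex (a,b)).\<close>
definition transfer_system :: "nat \<Rightarrow> nat \<Rightarrow> ((nat \<times> nat) \<times> (nat \<times> nat)) set \<Rightarrow> bool" where
  "transfer_system r s T \<longleftrightarrow>
     T \<subseteq> grid r s \<times> grid r s \<and>
     (\<forall>v\<in>grid r s. (v, v) \<in> T) \<and>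
     antisym T \<and> trans T \<and>
     (\<forall>i1 j1 i2 j2. ((i1, j1), (i2, j2)) \<in> T \<longrightarrow> i1 \<le> i2 \<and> j1 \<le> j2) \<and>
     (\<forall>i1 j1 i2 j2 a b. ((i1, j1), (i2, j2)) \<in> T \<longrightarrow> (a, b) \<in> grid r s \<longrightarrow>
        ((min i1 a, min j1 b), (min i2 a, min j2 b)) \<in> T)"

definition component :: "((nat \<times> nat) \<times> (nat \<times> nat)) set \<Rightarrow> nat \<times> nat \<Rightarrow> (nat \<times> nat) set" where
  "component T v = {w. (v, w) \<in> (T \<union> T\<inverse>)\<^sup>*}"

definition components :: "nat \<Rightarrow> nat \<Rightarrow> ((nat \<times> nat) \<times> (nat \<times> nat)) set \<Rightarrow> (nat \<times> nat) set set" where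
  "components r s T = component T ` grid r s"

definition Vset :: "nat \<Rightarrow> nat \<Rightarrow> (nat \<times> nat) set" where
  "Vset s l = {(i, j). i \<le> l \<and> j \<le> s}"

definition Hset :: "nat \<Rightarrow> nat \<Rightarrow> (nat \<times> nat) set" where
  "Hset r k = {(i, j). i \<le> r \<and> j \<le> k}"

definition Lset :: "nat \<Rightarrow> nat \<Rightarrow> nat \<Rightarrow> nat \<Rightarrow> (nat \<times> nat) set" where
  "Lset r s l k = Vset s l \<union> Hset r k"

end

theory Submission
  imports Defs "HOL-Library.Product_Order"
begin

text \<open>Restricting along a vertex m is the meet with m in the componentwise order, so the
  restriction axiom makes zig-zag paths restrict to zig-zag paths. Hence the component C of
  (0,0) is downward closed, and every component is closed under meets with its own vertices.
  With exactly two components the other one, the complement D of C in the grid, is a finite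
  meet-closed set and so has a least element c; being upward closed, D is the principal upset
  of c, and C is the grid minus that upset. Since c \<noteq> (0,0), this complement is a vertical
  strip, a horizontal strip, or their union, according to which coordinates of c vanish.\<close>

lemma Inf_fin_in_inf_closed:
  fixes D :: "'a::semilattice_inf set"
  assumes "finite D" "D \<noteq> {}" "\<And>x y. x \<in> D \<Longrightarrow> y \<in> D \<Longrightarrow> inf x y \<in> D"
  shows "Inf_fin D \<in> D"
proof -
  have "Inf_fin F \<in> D" if "finite F" "F \<noteq> {}" "F \<subseteq> D" for F
    using that by (induction F rule: finite_ne_induct) (simp_all add: assms(3))
  with assms(1,2) show ?thesis by blast
qed

lemma transfer_system_restrict:
  assumes "transfer_system r s T" "m \<in> grid r s" "(u, v) \<in> T"
  shows "(inf u m, inf v m) \<in> T"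
  using assms unfolding transfer_system_def
  by (cases u; cases v; cases m) (simp add: inf_nat_def)

lemma transfer_system_restrict_path:
  assumes "transfer_system r s T" "m \<in> grid r s" "(u, v) \<in> (T \<union> T\<inverse>)\<^sup>*"
  shows "(inf u m, inf v m) \<in> (T \<union> T\<inverse>)\<^sup>*"
  using assms(3)
proof (induction rule: rtrancl_induct)
  case (step v w)
  then have "(inf v m, inf w m) \<in> T \<union> T\<inverse>"
    using transfer_system_restrict[OF assms(1,2)] by blast
  with step.IH show ?case by (rule rtrancl_into_rtrancl)
qed simp

lemma self_in_component: "v \<in> component T v"
  by (simp add: component_def)

lemma component_sym:
  assumes "w \<in> component T v"
  shows "v \<in> component T w"
proof -
  have "sym ((T \<union> T\<inverse>)\<^sup>*)" by (intro sym_rtrancl sym_Un_converse)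
  with assms show ?thesis unfolding component_def by (auto dest: symD)
qed

lemma component_eq:
  assumes "w \<in> component T v"
  shows "component T w = component T v"
  using assms component_sym[OF assms] unfolding component_def
  by (auto intro: rtrancl_trans)

lemma component_subset_grid:
  assumes "transfer_system r s T" "v \<in> grid r s"
  shows "component T v \<subseteq> grid r s"
proof
  fix w assume "w \<in> component T v"
  then have "(v, w) \<in> (T \<union> T\<inverse>)\<^sup>*" by (simp add: component_def)
  then show "w \<in> grid r s"
    using assms unfolding transfer_system_def by induction auto
qed

lemma component_zero_down_closed:
  assumes "transfer_system r s T" "w \<in> component T (0, 0)" "v \<in> grid r s" "v \<le> w"
  shows "v \<in> component T (0, 0)"
proof -
  have "(inf (0, 0) v, inf w v) \<in> (T \<union> T\<inverse>)\<^sup>*"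
    using assms(2) by (intro transfer_system_restrict_path[OF assms(1,3)]) (simp add: component_def)
  moreover have "inf (0, 0) v = (0, 0)" by (cases v) (simp add: inf_nat_def)
  moreover have "inf w v = v" using assms(4) by (simp add: inf_absorb2)
  ultimately show ?thesis by (simp add: component_def)
qed

lemma component_inf_closed:
  assumes "transfer_system r s T" "x \<in> grid r s" "y \<in> component T x"
  shows "inf y x \<in> component T x"
proof -
  have "(inf x x, inf y x) \<in> (T \<union> T\<inverse>)\<^sup>*"
    using assms(3) by (intro transfer_system_restrict_path[OF assms(1,2)]) (simp add: component_def)
  then show ?thesis by (simp add: component_def)
qed

lemma two_components_complement:
  assumes "transfer_system r s T" "card (components r s T) = 2"
  obtains x where "x \<in> grid r s" "component T x = grid r s - component T (0, 0)"
proof -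
  let ?C = "component T (0, 0)"
  have "(0, 0) \<in> grid r s" by (simp add: grid_def)
  then have "?C \<in> components r s T" by (simp add: components_def)
  moreover have "finite (components r s T)" using assms(2) by (metis card.infinite zero_neq_numeral)
  ultimately have "card (components r s T - {?C}) = 1" using assms(2) by simp
  then obtain C' where C': "components r s T - {?C} = {C'}" by (rule card_1_singletonE)
  then have "C' \<in> components r s T" "C' \<noteq> ?C" by auto
  have "components r s T = {?C, C'}"
    using insert_Diff[OF \<open>?C \<in> components r s T\<close>] C' by simp
  from \<open>C' \<in> components r s T\<close> obtain x where x: "x \<in> grid r s" "component T x = C'"
    unfolding components_def by (rule imageE) simp
  have "component T x = grid r s - ?C"
  proof (intro equalityI subsetI)
    fix z assume z: "z \<in> component T x"
    then have "z \<in> grid r s" using component_subset_grid[OF assms(1) x(1)] by blast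
    moreover have "z \<notin> ?C"
    proof
      assume "z \<in> ?C"
      then have "component T z = ?C" by (rule component_eq)
      moreover have "component T z = C'" using component_eq[OF z] x(2) by simp
      ultimately show False using \<open>C' \<noteq> ?C\<close> by simp
    qed
    ultimately show "z \<in> grid r s - ?C" by blast
  next
    fix z assume z: "z \<in> grid r s - ?C"
    then have "component T z \<in> {?C, C'}"
      using \<open>components r s T = {?C, C'}\<close> by (auto simp: components_def)
    moreover have "component T z \<noteq> ?C" using z self_in_component by blast
    ultimately have "component T z = component T x" using x(2) by simp
    then show "z \<in> component T x" using self_in_component by blast
  qed
  with x(1) show thesis by (rule that)
qed

lemma two_components_zero_component:
  assumes "transfer_system r s T" "card (components r s T) = 2"
  obtains c where "c \<in> grid r s" "c \<noteq> (0, 0)"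
    "component T (0, 0) = {z \<in> grid r s. \<not> c \<le> z}"
proof -
  let ?C = "component T (0, 0)"
  obtain x where x: "x \<in> grid r s" and D: "component T x = grid r s - ?C"
    using two_components_complement[OF assms] .
  have "inf y z \<in> component T x" if "y \<in> component T x" "z \<in> component T x" for y z
    using component_inf_closed[OF assms(1), of y z] component_eq[OF that(1)] that D
    by (auto simp: inf_commute)
  moreover have "finite (component T x)" using D by (simp add: grid_def)
  ultimately have "Inf_fin (component T x) \<in> component T x"
    using Inf_fin_in_inf_closed self_in_component by blast
  moreover have "\<forall>z\<in>component T x. Inf_fin (component T x) \<le> z"
    using \<open>finite (component T x)\<close> by (blast intro: Inf_fin.coboundedI)
  ultimately obtain c where c: "c \<in> component T x" "\<forall>z\<in>component T x. c \<le> z" by blast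
  have "?C = {z \<in> grid r s. \<not> c \<le> z}"
  proof (intro equalityI subsetI)
    fix z assume "z \<in> ?C"
    moreover have "c \<notin> ?C" using c(1) D by blast
    ultimately show "z \<in> {z \<in> grid r s. \<not> c \<le> z}"
      using component_zero_down_closed[OF assms(1), of z c] c(1) D
        component_subset_grid[OF assms(1), of "(0, 0)"] by (auto simp: grid_def)
  next
    fix z assume "z \<in> {z \<in> grid r s. \<not> c \<le> z}"
    then show "z \<in> ?C" using c(2) D by blast
  qed
  moreover have "c \<noteq> (0, 0)" using c(1) D self_in_component by blast
  moreover have "c \<in> grid r s" using c(1) D by blast
  ultimately show thesis using that by blast
qed

lemma grid_minus_principal_upset:
  assumes "c \<in> grid r s" "c \<noteq> (0, 0)"
  defines "C \<equiv> {z \<in> grid r s. \<not> c \<le> z}"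
  shows "(\<exists>l<r. C = Vset s l) \<or> (\<exists>k<s. C = Hset r k) \<or> (\<exists>l<r. \<exists>k<s. C = Lset r s l k)"
proof -
  obtain a b where c: "c = (a, b)" "a \<le> r" "b \<le> s"
    using assms(1) by (cases c) (simp add: grid_def)
  consider "a = 0" "b > 0" | "a > 0" "b = 0" | "a > 0" "b > 0"
    using assms(2) c(1) by fastforce
  then show ?thesis
  proof cases
    case 1
    then have "C = Hset r (b - 1)" using c by (auto simp: C_def Hset_def grid_def)
    moreover have "b - 1 < s" using 1 c by simp
    ultimately show ?thesis by blast
  next
    case 2
    then have "C = Vset s (a - 1)" using c by (auto simp: C_def Vset_def grid_def)
    moreover have "a - 1 < r" using 2 c by simp
    ultimately show ?thesis by blast
  next
    case 3
    then have "C = Lset r s (a - 1) (b - 1)"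
      using c by (auto simp: C_def Lset_def Vset_def Hset_def grid_def)
    moreover have "a - 1 < r" "b - 1 < s" using 3 c by simp_all
    ultimately show ?thesis by blast
  qed
qed

theorem mainTheorem13:
  fixes p q r s :: nat
    and T :: "((nat \<times> nat) \<times> (nat \<times> nat)) set"
  assumes "prime p" and "prime q" and "p \<noteq> q"
    and "transfer_system r s T"
    and "card (components r s T) = 2"
  shows "(\<exists>l<r. component T (0, 0) = Vset s l) \<or>
         (\<exists>k<s. component T (0, 0) = Hset r k) \<or>
         (\<exists>l<r. \<exists>k<s. component T (0, 0) = Lset r s l k)"
proof -
  obtain c where "c \<in> grid r s" "c \<noteq> (0, 0)"
    and "component T (0, 0) = {z \<in> grid r s. \<not> c \<le> z}"
    using two_components_zero_component[OF assms(4,5)] .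
  then show ?thesis using grid_minus_principal_upset[of c r s] by simp
qed

end
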